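(* Let $G$ be a finite group and $p$ a prime dividing $|G|$. The finite poset $\mathcal{A}_p(G)/G$ is conically contractible.
   Context: $\mathcal{A}_p(G)$ is the poset of non-trivial elementary abelian $p$-subgroups of $G$ ordered by inclusion, with $G$ acting by conjugation $A^g=g^{-1}Ag$. $\mathcal{A}_p(G)/G$ is the orbit poset: $\overline{A}\le\overline{B}$ iff there are $A_1\in\overline{A}$, $B_1\in\overline{B}$ with $A_1\le B_1$. A finite poset $X$ is conically contractible if there exist an order-preserving map $f:X\to X$ and a point $x_0\in X$ such that $x\le f(x)\ge x_0$ for all $x\in X$ (or the dual inequalities), so that $\mathrm{id}_X$ is homotopic to a constant map. *)

theory Defs
  imports "HOL-Algebra.Algebra"
begin

definition elem_abelian_psubgroup :: "('a, 'b) monoid_scheme \<Rightarrow> nat \<Rightarrow> 'a set \<Rightarrow> bool" where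
  "elem_abelian_psubgroup G p A \<longleftrightarrow>
     subgroup A G \<and> (\<forall>x\<in>A. \<forall>y\<in>A. x \<otimes>\<^bsub>G\<^esub> y = y \<otimes>\<^bsub>G\<^esub> x)
     \<and> (\<forall>x\<in>A. x [^]\<^bsub>G\<^esub> p = \<one>\<^bsub>G\<^esub>)"

definition A_p :: "('a, 'b) monoid_scheme \<Rightarrow> nat \<Rightarrow> 'a set set" where
  "A_p G p = {A. elem_abelian_psubgroup G p A \<and> A \<noteq> {\<one>\<^bsub>G\<^esub>}}"

definition conj_set :: "('a, 'b) monoid_scheme \<Rightarrow> 'a set \<Rightarrow> 'a \<Rightarrow> 'a set" where
  "conj_set G A g = (\<lambda>a. inv\<^bsub>G\<^esub> g \<otimes>\<^bsub>G\<^esub> a \<otimes>\<^bsub>G\<^esub> g) ` A"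

definition conj_orbit :: "('a, 'b) monoid_scheme \<Rightarrow> 'a set \<Rightarrow> 'a set set" where
  "conj_orbit G A = {conj_set G A g | g. g \<in> carrier G}"

definition A_p_orbits :: "('a, 'b) monoid_scheme \<Rightarrow> nat \<Rightarrow> 'a set set set" where
  "A_p_orbits G p = conj_orbit G ` A_p G p"

definition orbit_le :: "'a set set \<Rightarrow> 'a set set \<Rightarrow> bool" where
  "orbit_le S T \<longleftrightarrow> (\<exists>a\<in>S. \<exists>b\<in>T. a \<subseteq> b)"

definition conically_contractible :: "'c set \<Rightarrow> ('c \<Rightarrow> 'c \<Rightarrow> bool) \<Rightarrow> bool" where
  "conically_contractible P leq \<longleftrightarrow>
     (\<exists>f x0. x0 \<in> P \<and> f ` P \<subseteq> P
        \<and> (\<forall>x\<in>P. \<forall>y\<in>P. leq x y \<longrightarrow> leq (f x) (f y))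
        \<and> ((\<forall>x\<in>P. leq x (f x) \<and> leq x0 (f x)) \<or> (\<forall>x\<in>P. leq (f x) x \<and> leq (f x) x0)))"

end

theory Submission
  imports Defs
begin

text \<open>
  Fix a Sylow \<open>p\<close>-subgroup \<open>S\<close> of \<open>G\<close>. Every orbit of \<open>\<A>\<^sub>p(G)\<close> has a representative
  \<open>A \<le> S\<close> for which \<open>S \<inter> C\<^sub>G(A)\<close> is a Sylow \<open>p\<close>-subgroup of \<open>C\<^sub>G(A)\<close>: take a Sylow
  subgroup of \<open>C\<^sub>G(A)\<close> containing \<open>A\<close> and conjugate it into \<open>S\<close>. Send the orbit of such an
  \<open>A\<close> to the orbit of \<open>\<Omega>\<^sub>1(Z(S \<inter> C\<^sub>G(A)))\<close>. Then \<open>A \<le> \<Omega>\<^sub>1(Z(S \<inter> C\<^sub>G(A))) \<ge> \<Omega>\<^sub>1(Z(S))\<close>,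
  so the orbit of \<open>\<Omega>\<^sub>1(Z(S))\<close> is the cone point. The map is order preserving: if
  \<open>A\<^sup>k \<le> B\<close>, Sylow's theorem in \<open>C\<^sub>G(A)\<close> moves \<open>S \<inter> C\<^sub>G(B)\<close> by some \<open>g\<close> into
  \<open>T = S \<inter> C\<^sub>G(A)\<close>; as \<open>(S \<inter> C\<^sub>G(B))\<^sup>g\<close> is Sylow in \<open>C\<^sub>G(B\<^sup>g)\<close> and \<open>Z(T)\<close> centralizes
  \<open>B\<^sup>g\<close>, we get \<open>Z(T) \<le> Z((S \<inter> C\<^sub>G(B))\<^sup>g)\<close>.
\<close>

section \<open>Finite \<open>p\<close>-groups\<close>

lemma group_actionI:
  fixes G (structure)
  assumes "group G"
    and closed: "\<And>g x. g \<in> carrier G \<Longrightarrow> x \<in> E \<Longrightarrow> act g x \<in> E"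
    and act_one: "\<And>x. x \<in> E \<Longrightarrow> act \<one>\<^bsub>G\<^esub> x = x"
    and act_mult: "\<And>g h x. g \<in> carrier G \<Longrightarrow> h \<in> carrier G \<Longrightarrow> x \<in> E \<Longrightarrow>
      act (g \<otimes>\<^bsub>G\<^esub> h) x = act g (act h x)"
  shows "group_action G E (\<lambda>g. \<lambda>x\<in>E. act g x)"
proof -
  interpret group G by fact
  have bij: "(\<lambda>x\<in>E. act g x) \<in> Bij E" if g: "g \<in> carrier G" for g
  proof -
    have inverse: "act (inv g) (act g x) = x" "act g (act (inv g) x) = x" if "x \<in> E" for x
      using act_mult[of "inv g" g x] act_mult[of g "inv g" x] g that act_one by auto
    have "bij_betw (act g) E E"
      by (rule bij_betwI[where g = "act (inv g)"]) (use closed g inverse in auto)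
    then have "bij_betw (\<lambda>x\<in>E. act g x) E E"
      by (metis (no_types, lifting) bij_betw_cong restrict_apply')
    then show ?thesis
      unfolding Bij_def by auto
  qed
  have "(\<lambda>g. \<lambda>x\<in>E. act g x) \<in> hom G (BijGroup E)"
  proof (rule homI)
    fix g assume "g \<in> carrier G"
    then show "(\<lambda>x\<in>E. act g x) \<in> carrier (BijGroup E)"
      using bij by (simp add: BijGroup_def)
  next
    fix g h assume gh: "g \<in> carrier G" "h \<in> carrier G"
    then show "(\<lambda>x\<in>E. act (g \<otimes> h) x) = (\<lambda>x\<in>E. act g x) \<otimes>\<^bsub>BijGroup E\<^esub> (\<lambda>x\<in>E. act h x)"
      using bij[OF gh(1)] bij[OF gh(2)]
      by (auto simp: BijGroup_def compose_def act_mult closed)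
  qed
  then show ?thesis
    unfolding group_action_def group_hom_def group_hom_axioms_def
    using group_BijGroup is_group by blast
qed

lemma (in group_action) card_fixed_points_cong:
  assumes fin: "finite E" and ord: "order G = p ^ n" and p: "Factorial_Ring.prime p"
  shows "card {x \<in> E. \<forall>g\<in>carrier G. \<phi> g x = x} mod p = card E mod p"
proof -
  define F where "F = {x \<in> E. \<forall>g\<in>carrier G. \<phi> g x = x}"
  have FE: "F \<subseteq> E"
    unfolding F_def by blast
  have F_orbit: "orbit G \<phi> x = {x}" if "x \<in> F" for x
    using that orbit_refl unfolding F_def orbit_def by auto
  have moving_orbit: "orbit G \<phi> x \<inter> F = {} \<and> p dvd card (orbit G \<phi> x)"
    if x: "x \<in> E" "x \<notin> F" for x
  proof
    show "orbit G \<phi> x \<inter> F = {}"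
    proof (rule ccontr)
      assume "orbit G \<phi> x \<inter> F \<noteq> {}"
      then obtain y where "y \<in> orbit G \<phi> x" "y \<in> F" by blast
      then have "x \<in> orbit G \<phi> y" using orbit_sym x(1) F_def by blast
      then show False using F_orbit \<open>y \<in> F\<close> x(2) by simp
    qed
    obtain i where i: "card (orbit G \<phi> x) = p ^ i"
      using orbit_stabilizer_theorem[OF x(1)] p ord
      by (metis dvd_triv_left divides_primepow_nat)
    have "orbit G \<phi> x \<noteq> {x}"
      using x unfolding F_def orbit_def by auto
    then have "card (orbit G \<phi> x) \<noteq> 1"
      using orbit_refl[OF x(1)] by (auto simp: card_1_singleton_iff)
    then show "p dvd card (orbit G \<phi> x)"
      using i by (cases i) auto
  qed
  define moving where "moving y = (if y \<in> F then 0 else 1::nat)" for y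
  have "p dvd (\<Sum>y\<in>orb. moving y)" if orb: "orb \<in> orbits G E \<phi>" for orb
  proof -
    obtain x where x: "x \<in> E" "orb = orbit G \<phi> x"
      using orb unfolding orbits_def by auto
    show ?thesis
    proof (cases "x \<in> F")
      case True
      then show ?thesis using F_orbit x(2) moving_def by simp
    next
      case False
      have "(\<Sum>y\<in>orb. moving y) = (\<Sum>y\<in>orb. 1)"
        using moving_orbit[OF x(1) False] x(2) by (intro sum.cong) (auto simp: moving_def)
      then show ?thesis
        using moving_orbit[OF x(1) False] x(2) by simp
    qed
  qed
  then have "p dvd (\<Sum>y\<in>E. moving y)"
    using disjoint_sum[OF fin, of moving] by (metis dvd_sum)
  moreover have "(\<Sum>y\<in>E. moving y) = card (E - F)"
    using fin by (simp add: moving_def sum.If_cases Diff_eq Int_commute)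
  moreover have "card E = card F + card (E - F)"
    using card_Diff_subset[OF finite_subset[OF FE fin] FE] card_mono[OF fin FE] by simp
  ultimately show ?thesis
    unfolding F_def[symmetric] by auto
qed

lemma (in group) p_group_center_nontrivial:
  assumes ord: "order G = p ^ n" and "n > 0" and p: "Factorial_Ring.prime p"
  shows "\<exists>z\<in>carrier G. z \<noteq> \<one> \<and> (\<forall>h\<in>carrier G. z \<otimes> h = h \<otimes> z)"
proof -
  define Z where "Z = {x \<in> carrier G. \<forall>g\<in>carrier G. (\<lambda>h\<in>carrier G. g \<otimes> h \<otimes> inv g) x = x}"
  have "order G > 0"
    using ord p by (simp add: prime_gt_0_nat)
  then have fin: "finite (carrier G)"
    by (simp add: order_gt_0_iff_finite)
  have "order G mod p = 0"
    using ord \<open>n > 0\<close> by (cases n) auto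
  then have "card Z mod p = 0"
    using group_action.card_fixed_points_cong[OF action_by_conjugation fin ord p]
    unfolding Z_def order_def by simp
  moreover have "\<one> \<in> Z" "finite Z"
    using fin unfolding Z_def by auto
  ultimately have "Z \<noteq> {\<one>}"
    using p by (auto simp: prime_nat_iff)
  then obtain z where z: "z \<in> Z" "z \<noteq> \<one>"
    using \<open>\<one> \<in> Z\<close> by blast
  have "z \<otimes> h = h \<otimes> z" if h: "h \<in> carrier G" for h
  proof -
    have zG: "z \<in> carrier G" and "h \<otimes> z \<otimes> inv h = z"
      using z h unfolding Z_def by auto
    then have "z \<otimes> h = h \<otimes> z \<otimes> inv h \<otimes> h"
      by simp
    also have "\<dots> = h \<otimes> z"
      using h zG by (simp add: m_assoc)
    finally show ?thesis .
  qed
  then show ?thesis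
    using z unfolding Z_def by auto
qed

lemma (in group) order_prime_power_if_exponent:
  fixes p :: nat
  assumes fin: "finite (carrier G)" and p: "Factorial_Ring.prime p"
    and exp: "\<And>x. x \<in> carrier G \<Longrightarrow> x [^] p = \<one>"
  shows "\<exists>k. order G = p ^ k"
proof (rule ccontr)
  assume "\<nexists>k. order G = p ^ k"
  moreover have "order G \<noteq> 0"
    using fin by (simp add: order_gt_0_iff_finite)
  ultimately obtain q where q: "q \<in> prime_factors (order G)" "q \<noteq> p"
    using Ex_other_prime_factor[of "order G" p] p by auto
  define m where "m = multiplicity q (order G)"
  have q_prime: "Factorial_Ring.prime q" and "q dvd order G"
    using q by (auto simp: in_prime_factors_iff)
  then have "m > 0"
    using \<open>order G \<noteq> 0\<close> unfolding m_def by (simp add: prime_multiplicity_gt_zero_iff)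
  have "order G = q ^ m * (order G div q ^ m)"
    unfolding m_def by (simp add: multiplicity_dvd)
  then obtain Q where Q: "subgroup Q G" "card Q = q ^ m"
    using sylow_thm[OF q_prime is_group _ fin] by blast
  interpret Q: group "G\<lparr>carrier := Q\<rparr>"
    using subgroup_imp_group[OF Q(1)] .
  have "card Q \<noteq> 1"
    using Q(2) \<open>m > 0\<close> prime_gt_1_nat[OF q_prime] by simp
  then have "Q \<noteq> {\<one>}"
    by auto
  then obtain x where x: "x \<in> Q" "x \<noteq> \<one>"
    using subgroup.one_closed[OF Q(1)] by blast
  have xG: "x \<in> carrier G"
    using x(1) subgroup.subset[OF Q(1)] by blast
  have "x [^] card Q = \<one>"
    using Q.pow_order_eq_1[of x] x Q(1) by (simp add: order_def nat_pow_consistent[symmetric])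
  then have "ord x dvd q ^ m" "ord x dvd p"
    using Q(2) exp[OF xG] pow_eq_id[OF xG] by auto
  moreover have "ord x \<noteq> 1"
    using ord_eq_1[OF xG] x(2) by simp
  ultimately have "ord x = p"
    using p by (auto simp: prime_nat_iff)
  then have "p dvd q"
    using \<open>ord x dvd q ^ m\<close> prime_dvd_power[OF p] by simp
  then show False
    using primes_dvd_imp_eq[OF p q_prime] q(2) by simp
qed

lemma (in group) card_elem_abelian_psubgroup:
  assumes "finite (carrier G)" and "Factorial_Ring.prime p" and "elem_abelian_psubgroup G p A"
  shows "\<exists>k. card A = p ^ k"
proof -
  have A: "subgroup A G" and exp: "\<And>x. x \<in> A \<Longrightarrow> x [^] p = \<one>"
    using assms(3) unfolding elem_abelian_psubgroup_def by auto
  interpret A: group "G\<lparr>carrier := A\<rparr>"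
    using subgroup_imp_group[OF A] .
  have "\<exists>k. order (G\<lparr>carrier := A\<rparr>) = p ^ k"
    using assms(1,2) A exp
    by (intro A.order_prime_power_if_exponent)
      (auto simp: nat_pow_consistent[symmetric] intro: finite_subset[OF subgroup.subset])
  then show ?thesis
    by (simp add: order_def)
qed

lemma (in group) ex_pow_of_order_prime:
  fixes p n :: nat
  assumes x: "x \<in> carrier G" "x \<noteq> \<one>" and "x [^] (p ^ n) = \<one>" and p: "Factorial_Ring.prime p"
  shows "\<exists>k::nat. x [^] k \<noteq> \<one> \<and> (x [^] k) [^] p = \<one>"
proof -
  obtain j where j: "ord x = p ^ j"
    using assms(3) pow_eq_id[OF x(1)] divides_primepow_nat[OF p] by auto
  have "j \<noteq> 0"
    using j ord_eq_1[OF x(1)] x(2) by auto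
  then obtain i where i: "j = Suc i"
    using not0_implies_Suc by blast
  have "(x [^] (p ^ i)) [^] p = \<one>"
    using x(1) j i by (simp add: nat_pow_pow pow_eq_id mult.commute)
  moreover have "\<not> p ^ j dvd p ^ i"
    using i power_dvd_imp_le[of p j i] prime_gt_1_nat[OF p] by auto
  then have "x [^] (p ^ i) \<noteq> \<one>"
    using j pow_eq_id[OF x(1)] by simp
  ultimately show ?thesis
    by blast
qed

section \<open>Sylow subgroups\<close>

definition sylow_subgroup :: "('a, 'b) monoid_scheme \<Rightarrow> nat \<Rightarrow> 'a set \<Rightarrow> 'a set \<Rightarrow> bool" where
  "sylow_subgroup G p H P \<longleftrightarrow> subgroup P G \<and> P \<subseteq> H \<and> card P = p ^ multiplicity p (card H)"

lemma (in group) card_subgroup_dvd: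
  assumes "subgroup I G" "subgroup J G" "I \<subseteq> J"
  shows "card I dvd card J"
proof -
  interpret J: group "G\<lparr>carrier := J\<rparr>"
    using subgroup_imp_group[OF assms(2)] .
  have "subgroup I (G\<lparr>carrier := J\<rparr>)"
    using subgroup_incl assms by blast
  from J.lagrange[OF this] have "card (rcosets\<^bsub>G\<lparr>carrier := J\<rparr>\<^esub> I) * card I = card J"
    by (simp add: order_def)
  then show ?thesis
    by (metis dvd_triv_right)
qed

lemma (in group) rcosets_action:
  assumes "subgroup S G"
  shows "group_action G (rcosets S) (\<lambda>g. \<lambda>C\<in>rcosets S. C #> inv g)"
proof (rule group_actionI)
  have S_carrier: "C \<subseteq> carrier G" if "C \<in> rcosets S" for C
    using that subgroup.subset[OF assms] r_coset_subset_G unfolding RCOSETS_def by blast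
  show "group G" ..
  show "C #> inv g \<in> rcosets S" if "g \<in> carrier G" "C \<in> rcosets S" for g C
    using that subgroup.subset[OF assms]
    by (auto simp: RCOSETS_def coset_mult_assoc intro!: rcosetsI)
  show "C #> inv \<one> = C" if "C \<in> rcosets S" for C
    using S_carrier[OF that] by simp
  show "C #> inv (g \<otimes> h) = C #> inv h #> inv g"
    if "g \<in> carrier G" "h \<in> carrier G" "C \<in> rcosets S" for g h C
    using that S_carrier[OF that(3)] by (simp add: inv_mult_group coset_mult_assoc)
qed

lemma (in group) conj_subset_if_rcoset_fixed:
  assumes S: "subgroup S G" and R: "subgroup R G" and x: "x \<in> carrier G"
    and fixed: "\<forall>r\<in>R. S #> x #> inv r = S #> x"
  shows "conj_set G R (inv x) \<subseteq> S"
proof -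
  have "x \<otimes> r \<otimes> inv x \<in> S" if r: "r \<in> R" for r
  proof -
    have rG: "r \<in> carrier G" and "inv r \<in> R"
      using r subgroup.subset[OF R] subgroup.m_inv_closed[OF R] by auto
    then have "S #> x #> r = S #> x"
      using fixed by (metis inv_inv)
    then have "S #> (x \<otimes> r) = S #> x"
      using x rG subgroup.subset[OF S] by (simp add: coset_mult_assoc)
    then have "x \<otimes> r \<in> S #> x"
      using rcos_self[OF _ S] x rG by (metis m_closed)
    then show ?thesis
      using subgroup.rcos_module_imp[OF S is_group x] by simp
  qed
  then show ?thesis
    unfolding conj_set_def using x by auto
qed

locale finite_group_prime = group G for G (structure) +
  fixes p :: nat
  assumes finite_carrier: "finite (carrier G)" and prime_p: "Factorial_Ring.prime p"
begin

lemma finite_subgroup: "subgroup H G \<Longrightarrow> finite H"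
  using finite_carrier subgroup.subset finite_subset by blast

lemma card_subgroup_prime_power:
  assumes "subgroup U G" "subgroup T G" "U \<subseteq> T" "card T = p ^ a"
  shows "\<exists>j. card U = p ^ j"
  using card_subgroup_dvd[OF assms(1-3)] assms(4) prime_p by (auto simp: divides_primepow_nat)

lemma card_p_subgroup_le:
  assumes H: "subgroup H G" and U: "subgroup U G" "U \<subseteq> H" "card U = p ^ j"
  shows "card U \<le> p ^ multiplicity p (card H)"
proof -
  have "card H \<noteq> 0"
    using finite_subgroup[OF H] subgroup.one_closed[OF H] by auto
  moreover have "p ^ j dvd card H"
    using card_subgroup_dvd[OF U(1) H U(2)] U(3) by simp
  ultimately have "j \<le> multiplicity p (card H)"
    using multiplicity_geI[of "card H" p j] prime_gt_1_nat[OF prime_p] by auto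
  then show ?thesis
    using U(3) prime_gt_0_nat[OF prime_p] by (simp add: power_increasing)
qed

lemma sylow_subgroup_maximal:
  assumes P: "sylow_subgroup G p H P" and H: "subgroup H G"
    and U: "subgroup U G" "P \<subseteq> U" "U \<subseteq> H" "card U = p ^ j"
  shows "U = P"
proof -
  have "card U \<le> card P"
    using card_p_subgroup_le[OF H U(1,3,4)] P unfolding sylow_subgroup_def by simp
  then show ?thesis
    using card_seteq[OF finite_subgroup[OF U(1)] U(2)] by simp
qed

lemma sylow_subgroup_exists:
  assumes H: "subgroup H G"
  shows "\<exists>P. sylow_subgroup G p H P"
proof -
  interpret H: group "G\<lparr>carrier := H\<rparr>"
    using subgroup_imp_group[OF H] .
  have "order (G\<lparr>carrier := H\<rparr>) =
      p ^ multiplicity p (card H) * (order (G\<lparr>carrier := H\<rparr>) div p ^ multiplicity p (card H))"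
    by (simp add: order_def multiplicity_dvd)
  then obtain P where P: "subgroup P (G\<lparr>carrier := H\<rparr>)" "card P = p ^ multiplicity p (card H)"
    using sylow_thm[OF prime_p H.group_axioms] finite_subgroup[OF H] by auto
  then show ?thesis
    unfolding sylow_subgroup_def using incl_subgroup[OF H P(1)] subgroup.subset[OF P(1)] by auto
qed

lemma not_dvd_card_rcosets_sylow:
  assumes "sylow_subgroup G p (carrier G) S"
  shows "\<not> p dvd card (rcosets S)"
proof
  have S: "subgroup S G" "card S = p ^ multiplicity p (order G)"
    using assms unfolding sylow_subgroup_def order_def by auto
  assume "p dvd card (rcosets S)"
  then have "p ^ Suc (multiplicity p (order G)) dvd card (rcosets S) * card S"
    using S(2) by (simp add: mult_dvd_mono)
  then have "p ^ Suc (multiplicity p (order G)) dvd order G"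
    using lagrange[OF S(1)] by simp
  then have "Suc (multiplicity p (order G)) \<le> multiplicity p (order G)"
    using multiplicity_geI[of "order G" p] finite_carrier prime_gt_1_nat[OF prime_p]
    by (auto simp: order_gt_0_iff_finite[symmetric])
  then show False
    by simp
qed

lemma sylow_conj_subset_of_carrier:
  assumes S: "sylow_subgroup G p (carrier G) S" and R: "subgroup R G" "card R = p ^ n"
  shows "\<exists>x\<in>carrier G. conj_set G R x \<subseteq> S"
proof -
  have S_sub: "subgroup S G"
    using S unfolding sylow_subgroup_def by blast
  interpret R: group "G\<lparr>carrier := R\<rparr>"
    using subgroup_imp_group[OF R(1)] .
  interpret R_act: group_action "G\<lparr>carrier := R\<rparr>" "rcosets S" "\<lambda>g. \<lambda>C\<in>rcosets S. C #> inv g"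
    using group_action.induced_action[OF rcosets_action[OF S_sub] R(1)] .
  have "finite (rcosets S)"
    using finite_carrier by (simp add: RCOSETS_def)
  then have "card {C \<in> rcosets S. \<forall>r\<in>carrier (G\<lparr>carrier := R\<rparr>).
      (\<lambda>C\<in>rcosets S. C #> inv r) C = C} mod p = card (rcosets S) mod p"
    using R(2) prime_p by (intro R_act.card_fixed_points_cong[where n = n]) (auto simp: order_def)
  moreover have "{C \<in> rcosets S. \<forall>r\<in>carrier (G\<lparr>carrier := R\<rparr>).
      (\<lambda>C\<in>rcosets S. C #> inv r) C = C} = {C \<in> rcosets S. \<forall>r\<in>R. C #> inv r = C}"
    by auto
  ultimately have "{C \<in> rcosets S. \<forall>r\<in>R. C #> inv r = C} \<noteq> {}"
    using not_dvd_card_rcosets_sylow[OF S] by (metis card.empty dvd_eq_mod_eq_0 mod_0)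
  then obtain x where x: "x \<in> carrier G" "\<forall>r\<in>R. S #> x #> inv r = S #> x"
    unfolding RCOSETS_def by blast
  then show ?thesis
    using conj_subset_if_rcoset_fixed[OF S_sub R(1)] by blast
qed

lemma sylow_conj_subset:
  assumes H: "subgroup H G" and P: "sylow_subgroup G p H P"
    and R: "subgroup R G" "R \<subseteq> H" "card R = p ^ n"
  shows "\<exists>x\<in>H. conj_set G R x \<subseteq> P"
proof -
  interpret H: finite_group_prime "G\<lparr>carrier := H\<rparr>" p
    using subgroup_imp_group[OF H] finite_subgroup[OF H] prime_p
    by (simp add: finite_group_prime_def finite_group_prime_axioms_def)
  have "sylow_subgroup (G\<lparr>carrier := H\<rparr>) p (carrier (G\<lparr>carrier := H\<rparr>)) P"
    using P subgroup_incl[OF _ H] unfolding sylow_subgroup_def by auto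
  then obtain x where x: "x \<in> H" "conj_set (G\<lparr>carrier := H\<rparr>) R x \<subseteq> P"
    using H.sylow_conj_subset_of_carrier[of P R n] subgroup_incl[OF R(1) H R(2)] R(3) by auto
  moreover have "conj_set (G\<lparr>carrier := H\<rparr>) R x = conj_set G R x"
    unfolding conj_set_def using m_inv_consistent[OF H x(1)] by simp
  ultimately show ?thesis
    by auto
qed

end

section \<open>Conjugation, centralizers and centres\<close>

definition centralizer :: "('a, 'b) monoid_scheme \<Rightarrow> 'a set \<Rightarrow> 'a set" where
  "centralizer G A = {g \<in> carrier G. \<forall>a\<in>A. g \<otimes>\<^bsub>G\<^esub> a = a \<otimes>\<^bsub>G\<^esub> g}"

definition center :: "('a, 'b) monoid_scheme \<Rightarrow> 'a set \<Rightarrow> 'a set" where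
  "center G H = H \<inter> centralizer G H"

definition omega1_center :: "('a, 'b) monoid_scheme \<Rightarrow> nat \<Rightarrow> 'a set \<Rightarrow> 'a set" where
  "omega1_center G p H = {z \<in> center G H. z [^]\<^bsub>G\<^esub> p = \<one>\<^bsub>G\<^esub>}"

context group
begin

lemma inv_mult_cancel_left [simp]: "x \<in> carrier G \<Longrightarrow> y \<in> carrier G \<Longrightarrow> inv x \<otimes> (x \<otimes> y) = y"
  by (simp add: m_assoc [symmetric])

lemma mult_inv_cancel_left [simp]: "x \<in> carrier G \<Longrightarrow> y \<in> carrier G \<Longrightarrow> x \<otimes> (inv x \<otimes> y) = y"
  by (simp add: m_assoc [symmetric])

lemma conj_inv_conj [simp]: "g \<in> carrier G \<Longrightarrow> y \<in> carrier G \<Longrightarrow> inv g \<otimes> (g \<otimes> y \<otimes> inv g) \<otimes> g = y"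
  by (simp add: m_assoc)

lemma conj_hom: "g \<in> carrier G \<Longrightarrow> group_hom G G (\<lambda>x. inv g \<otimes> x \<otimes> g)"
  by (intro group_hom.intro group_hom_axioms.intro homI is_group) (simp_all add: m_assoc)

lemma conj_commute_iff:
  assumes "g \<in> carrier G" "x \<in> carrier G" "a \<in> carrier G"
  shows "(inv g \<otimes> x \<otimes> g) \<otimes> (inv g \<otimes> a \<otimes> g) = (inv g \<otimes> a \<otimes> g) \<otimes> (inv g \<otimes> x \<otimes> g)
    \<longleftrightarrow> x \<otimes> a = a \<otimes> x"
proof -
  have "(inv g \<otimes> x \<otimes> g) \<otimes> (inv g \<otimes> a \<otimes> g) = inv g \<otimes> (x \<otimes> a) \<otimes> g"
    "(inv g \<otimes> a \<otimes> g) \<otimes> (inv g \<otimes> x \<otimes> g) = inv g \<otimes> (a \<otimes> x) \<otimes> g"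
    using assms by (simp_all add: m_assoc)
  then show ?thesis
    using assms by simp
qed

lemma conj_set_iff:
  assumes "A \<subseteq> carrier G" "g \<in> carrier G"
  shows "y \<in> conj_set G A g \<longleftrightarrow> y \<in> carrier G \<and> g \<otimes> y \<otimes> inv g \<in> A"
proof
  assume "y \<in> conj_set G A g"
  then obtain a where "a \<in> A" "y = inv g \<otimes> a \<otimes> g"
    unfolding conj_set_def by blast
  then show "y \<in> carrier G \<and> g \<otimes> y \<otimes> inv g \<in> A"
    using assms by (auto simp: m_assoc)
next
  assume "y \<in> carrier G \<and> g \<otimes> y \<otimes> inv g \<in> A"
  moreover have "y = inv g \<otimes> (g \<otimes> y \<otimes> inv g) \<otimes> g" if "y \<in> carrier G"
    using that assms(2) by (simp add: m_assoc)
  ultimately show "y \<in> conj_set G A g"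
    unfolding conj_set_def by blast
qed

lemma conj_set_subset_carrier: "A \<subseteq> carrier G \<Longrightarrow> g \<in> carrier G \<Longrightarrow> conj_set G A g \<subseteq> carrier G"
  by (auto simp: conj_set_iff)

lemma conj_set_mono: "A \<subseteq> B \<Longrightarrow> conj_set G A g \<subseteq> conj_set G B g"
  unfolding conj_set_def by blast

lemma conj_set_mult:
  "A \<subseteq> carrier G \<Longrightarrow> g \<in> carrier G \<Longrightarrow> h \<in> carrier G \<Longrightarrow>
    conj_set G (conj_set G A g) h = conj_set G A (g \<otimes> h)"
  unfolding conj_set_def image_image
  by (intro image_cong refl) (auto simp: inv_mult_group m_assoc subsetD)

lemma conj_set_one: "A \<subseteq> carrier G \<Longrightarrow> conj_set G A \<one> = A"
  unfolding conj_set_def by (auto simp: subsetD image_iff)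

lemma conj_set_inv_cancel:
  "A \<subseteq> carrier G \<Longrightarrow> g \<in> carrier G \<Longrightarrow> conj_set G (conj_set G A g) (inv g) = A"
  by (simp add: conj_set_mult conj_set_one)

lemma card_conj_set: "A \<subseteq> carrier G \<Longrightarrow> g \<in> carrier G \<Longrightarrow> card (conj_set G A g) = card A"
  unfolding conj_set_def by (rule card_image) (auto intro!: inj_onI simp: subsetD)

lemma subgroup_conj_set: "subgroup A G \<Longrightarrow> g \<in> carrier G \<Longrightarrow> subgroup (conj_set G A g) G"
  unfolding conj_set_def by (rule group_hom.subgroup_img_is_subgroup[OF conj_hom])

lemma conj_set_Int:
  assumes "A \<subseteq> carrier G" "B \<subseteq> carrier G" "g \<in> carrier G"
  shows "conj_set G (A \<inter> B) g = conj_set G A g \<inter> conj_set G B g"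
  using conj_set_iff[of "A \<inter> B" g] conj_set_iff[of A g] conj_set_iff[of B g] assms by auto

lemma conj_set_in_conj_orbit: "g \<in> carrier G \<Longrightarrow> conj_set G A g \<in> conj_orbit G A"
  unfolding conj_orbit_def by blast

lemma self_in_conj_orbit: "A \<subseteq> carrier G \<Longrightarrow> A \<in> conj_orbit G A"
  using conj_set_in_conj_orbit[of \<one> A] by (simp add: conj_set_one)

lemma conj_orbit_eq:
  assumes A: "A \<subseteq> carrier G" and B: "B \<in> conj_orbit G A"
  shows "conj_orbit G B = conj_orbit G A"
proof -
  obtain h where h: "h \<in> carrier G" "B = conj_set G A h"
    using B unfolding conj_orbit_def by blast
  have "conj_set G B g \<in> conj_orbit G A" if "g \<in> carrier G" for g
    using that h A by (simp add: conj_set_mult conj_set_in_conj_orbit)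
  moreover have "conj_set G A g \<in> conj_orbit G B" if "g \<in> carrier G" for g
  proof -
    have "conj_set G A g = conj_set G B (inv h \<otimes> g)"
      using that h A by (simp add: conj_set_mult m_assoc flip: inv_mult_group)
    then show ?thesis
      using that h by (simp add: conj_set_in_conj_orbit)
  qed
  ultimately show ?thesis
    unfolding conj_orbit_def by blast
qed

lemma subgroup_centralizer:
  assumes "A \<subseteq> carrier G"
  shows "subgroup (centralizer G A) G"
proof (rule subgroupI)
  show "centralizer G A \<subseteq> carrier G" "centralizer G A \<noteq> {}"
    using assms by (auto simp: centralizer_def intro!: exI[of _ \<one>] simp: subsetD)
next
  fix x assume x: "x \<in> centralizer G A"
  have "inv x \<otimes> a = a \<otimes> inv x" if "a \<in> A" for a
  proof -
    have "x \<in> carrier G" "a \<in> carrier G" "x \<otimes> a = a \<otimes> x"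
      using x that assms by (auto simp: centralizer_def)
    then have "inv x \<otimes> (a \<otimes> x) \<otimes> inv x = inv x \<otimes> (x \<otimes> a) \<otimes> inv x"
      by simp
    then show ?thesis
      using \<open>x \<in> carrier G\<close> \<open>a \<in> carrier G\<close> by (simp add: m_assoc)
  qed
  then show "inv x \<in> centralizer G A"
    using x by (simp add: centralizer_def)
next
  fix x y assume x: "x \<in> centralizer G A" and y: "y \<in> centralizer G A"
  have "x \<otimes> y \<otimes> a = a \<otimes> (x \<otimes> y)" if "a \<in> A" for a
  proof -
    have xy: "x \<in> carrier G" "y \<in> carrier G" "a \<in> carrier G"
      using x y that assms by (auto simp: centralizer_def)
    have "x \<otimes> y \<otimes> a = x \<otimes> (a \<otimes> y)"
      using xy y that by (simp add: m_assoc centralizer_def)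
    also have "\<dots> = (a \<otimes> x) \<otimes> y"
      using xy x that by (simp flip: m_assoc add: centralizer_def)
    finally show ?thesis
      using xy by (simp add: m_assoc)
  qed
  then show "x \<otimes> y \<in> centralizer G A"
    using x y by (simp add: centralizer_def)
qed

lemma centralizer_antimono: "A \<subseteq> B \<Longrightarrow> centralizer G B \<subseteq> centralizer G A"
  unfolding centralizer_def by blast

lemma conj_set_self_if_centralizer:
  assumes "A \<subseteq> carrier G" "c \<in> centralizer G A"
  shows "conj_set G A c = A"
proof -
  have "inv c \<otimes> a \<otimes> c = a" if "a \<in> A" for a
  proof -
    have "c \<in> carrier G" "a \<in> carrier G" "a \<otimes> c = c \<otimes> a"
      using assms that by (auto simp: centralizer_def)
    then show ?thesis
      by (simp add: m_assoc)
  qed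
  then have "conj_set G A c = (\<lambda>a. a) ` A"
    unfolding conj_set_def by (rule image_cong[OF refl])
  then show ?thesis
    by simp
qed

lemma centralizer_conj_set:
  assumes A: "A \<subseteq> carrier G" and g: "g \<in> carrier G"
  shows "conj_set G (centralizer G A) g = centralizer G (conj_set G A g)"
proof (intro equalityI subsetI)
  fix y assume "y \<in> conj_set G (centralizer G A) g"
  then have y: "y \<in> carrier G" and c: "g \<otimes> y \<otimes> inv g \<in> centralizer G A"
    using conj_set_iff[of "centralizer G A" g y] g by (auto simp: centralizer_def)
  have "y \<otimes> (inv g \<otimes> a \<otimes> g) = (inv g \<otimes> a \<otimes> g) \<otimes> y" if "a \<in> A" for a
    using conj_commute_iff[of g "g \<otimes> y \<otimes> inv g" a] c that A g y
    by (simp add: centralizer_def subsetD)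
  then show "y \<in> centralizer G (conj_set G A g)"
    using y unfolding centralizer_def conj_set_def by blast
next
  fix y assume "y \<in> centralizer G (conj_set G A g)"
  then have y: "y \<in> carrier G" and comm: "\<And>a. a \<in> A \<Longrightarrow> y \<otimes> (inv g \<otimes> a \<otimes> g) = (inv g \<otimes> a \<otimes> g) \<otimes> y"
    unfolding centralizer_def conj_set_def by auto
  have "(g \<otimes> y \<otimes> inv g) \<otimes> a = a \<otimes> (g \<otimes> y \<otimes> inv g)" if "a \<in> A" for a
    using conj_commute_iff[of g "g \<otimes> y \<otimes> inv g" a] comm[OF that] that A g y by (simp add: subsetD)
  then show "y \<in> conj_set G (centralizer G A) g"
    using conj_set_iff[of "centralizer G A" g y] g y by (simp add: centralizer_def)
qed

lemma centralizer_subset_carrier: "centralizer G A \<subseteq> carrier G"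
  unfolding centralizer_def by blast

lemma center_subset: "center G H \<subseteq> H"
  unfolding center_def by blast

lemma subgroup_center: "subgroup H G \<Longrightarrow> subgroup (center G H) G"
  unfolding center_def by (simp add: subgroups_Inter_pair subgroup_centralizer subgroup.subset)

lemma center_conj_set:
  assumes "H \<subseteq> carrier G" "g \<in> carrier G"
  shows "conj_set G (center G H) g = center G (conj_set G H g)"
  using assms unfolding center_def
  by (simp add: conj_set_Int centralizer_conj_set centralizer_subset_carrier)

lemma conj_set_pow_eq_one:
  assumes g: "g \<in> carrier G"
  shows "conj_set G {z \<in> carrier G. z [^] n = \<one>} g = {z \<in> carrier G. z [^] (n::nat) = \<one>}"
proof -
  have "(g \<otimes> y \<otimes> inv g) [^] n = g \<otimes> (y [^] n) \<otimes> inv g" if "y \<in> carrier G" for y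
    using group_hom.hom_nat_pow[OF conj_hom[of "inv g"], of y n] g that by simp
  moreover have "g \<otimes> w \<otimes> inv g = \<one> \<longleftrightarrow> w = \<one>" if "w \<in> carrier G" for w
  proof
    assume "g \<otimes> w \<otimes> inv g = \<one>"
    then have "w = inv g \<otimes> \<one> \<otimes> g"
      using conj_inv_conj[OF g that] by simp
    then show "w = \<one>"
      using g by simp
  qed (use g in simp)
  ultimately show ?thesis
    using g by (auto simp: conj_set_iff[OF _ g])
qed

lemma omega1_center_conj_set:
  assumes "H \<subseteq> carrier G" "g \<in> carrier G"
  shows "conj_set G (omega1_center G p H) g = omega1_center G p (conj_set G H g)"
proof -
  have omega: "omega1_center G p K = center G K \<inter> {z \<in> carrier G. z [^] p = \<one>}"
    if "K \<subseteq> carrier G" for K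
    using that center_subset[of K] unfolding omega1_center_def by blast
  show ?thesis
    using assms center_subset[of H]
    by (simp add: omega conj_set_subset_carrier conj_set_Int center_conj_set conj_set_pow_eq_one)
qed

lemma elem_abelian_omega1_center:
  assumes H: "subgroup H G"
  shows "elem_abelian_psubgroup G p (omega1_center G p H)"
proof -
  have Z: "subgroup (center G H) G"
    using subgroup_center[OF H] .
  have comm: "x \<otimes> y = y \<otimes> x" if "x \<in> center G H" "y \<in> center G H" for x y
    using that unfolding center_def centralizer_def by blast
  have carrier: "x \<in> carrier G" if "x \<in> center G H" for x
    using that subgroup.subset[OF Z] by blast
  have "subgroup (omega1_center G p H) G"
  proof (rule subgroupI)
    show "omega1_center G p H \<subseteq> carrier G" "omega1_center G p H \<noteq> {}"
      using carrier subgroup.one_closed[OF Z] unfolding omega1_center_def by auto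
  next
    fix a assume "a \<in> omega1_center G p H"
    then show "inv a \<in> omega1_center G p H"
      using subgroup.m_inv_closed[OF Z] carrier nat_pow_inv unfolding omega1_center_def by auto
  next
    fix a b assume "a \<in> omega1_center G p H" "b \<in> omega1_center G p H"
    then show "a \<otimes> b \<in> omega1_center G p H"
      using subgroup.m_closed[OF Z] carrier comm pow_mult_distrib
      unfolding omega1_center_def by auto
  qed
  then show ?thesis
    using comm unfolding elem_abelian_psubgroup_def omega1_center_def by auto
qed

lemma elem_abelian_conj_set:
  assumes A: "elem_abelian_psubgroup G p A" and g: "g \<in> carrier G"
  shows "elem_abelian_psubgroup G p (conj_set G A g)"
proof -
  interpret conj: group_hom G G "\<lambda>x. inv g \<otimes> x \<otimes> g"
    using conj_hom[OF g] .
  have sub: "subgroup A G" and comm: "\<forall>x\<in>A. \<forall>y\<in>A. x \<otimes> y = y \<otimes> x"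
    and exp: "\<forall>x\<in>A. x [^] p = \<one>"
    using A unfolding elem_abelian_psubgroup_def by auto
  have "\<forall>x\<in>conj_set G A g. \<forall>y\<in>conj_set G A g. x \<otimes> y = y \<otimes> x"
    using comm subgroup.subset[OF sub] g by (auto simp: conj_set_def conj_commute_iff subsetD)
  moreover have "\<forall>x\<in>conj_set G A g. x [^] p = \<one>"
    using exp subgroup.subset[OF sub] g by (auto simp: conj_set_def subsetD simp flip: conj.hom_nat_pow)
  ultimately show ?thesis
    using subgroup_conj_set[OF sub g] unfolding elem_abelian_psubgroup_def by blast
qed

lemma A_p_subgroup: "A \<in> A_p G p \<Longrightarrow> subgroup A G"
  unfolding A_p_def elem_abelian_psubgroup_def by blast

lemma A_p_subset_carrier: "A \<in> A_p G p \<Longrightarrow> A \<subseteq> carrier G"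
  using A_p_subgroup subgroup.subset by blast

lemma A_p_subset_centralizer: "A \<in> A_p G p \<Longrightarrow> A \<subseteq> centralizer G A"
  using A_p_subset_carrier unfolding A_p_def elem_abelian_psubgroup_def centralizer_def by blast

lemma A_p_conj_set:
  assumes A: "A \<in> A_p G p" and g: "g \<in> carrier G"
  shows "conj_set G A g \<in> A_p G p"
proof -
  have "conj_set G A g \<noteq> {\<one>}"
  proof
    assume "conj_set G A g = {\<one>}"
    then have "conj_set G (conj_set G A g) (inv g) = {\<one>}"
      using g by (simp add: conj_set_def)
    then show False
      using A conj_set_inv_cancel[OF A_p_subset_carrier[OF A] g] by (simp add: A_p_def)
  qed
  then show ?thesis
    using A g elem_abelian_conj_set unfolding A_p_def by blast
qed

lemma A_p_subset_omega1_center: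
  assumes A: "A \<in> A_p G p" and "A \<subseteq> H"
  shows "A \<subseteq> omega1_center G p (H \<inter> centralizer G A)"
proof
  fix a assume a: "a \<in> A"
  have "a \<in> H \<inter> centralizer G A"
    using a assms A_p_subset_centralizer[OF A] by blast
  moreover have "a \<in> centralizer G (H \<inter> centralizer G A)"
    using a A_p_subset_carrier[OF A] unfolding centralizer_def by auto
  moreover have "a [^] p = \<one>"
    using a A unfolding A_p_def elem_abelian_psubgroup_def by blast
  ultimately show "a \<in> omega1_center G p (H \<inter> centralizer G A)"
    unfolding omega1_center_def center_def by blast
qed

lemma omega1_center_subset_Int_centralizer:
  assumes "A \<subseteq> H" "H \<subseteq> carrier G"
  shows "omega1_center G p H \<subseteq> omega1_center G p (H \<inter> centralizer G A)"
  using assms unfolding omega1_center_def center_def centralizer_def by blast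

lemma omega1_center_in_A_p:
  assumes "subgroup H G" and "A \<in> A_p G p" and "A \<subseteq> omega1_center G p H"
  shows "omega1_center G p H \<in> A_p G p"
  using assms elem_abelian_omega1_center subgroup.one_closed[OF A_p_subgroup[OF assms(2)]]
  unfolding A_p_def by blast

end

section \<open>Centres of Sylow subgroups\<close>

context finite_group_prime
begin

lemma omega1_center_nontrivial:
  assumes P: "subgroup P G" "card P = p ^ n" "n > 0"
  shows "omega1_center G p P \<noteq> {\<one>}"
proof -
  interpret P: group "G\<lparr>carrier := P\<rparr>"
    using subgroup_imp_group[OF P(1)] .
  obtain z where z: "z \<in> P" "z \<noteq> \<one>" "\<forall>h\<in>P. z \<otimes> h = h \<otimes> z"
    using P.p_group_center_nontrivial[of p n] P prime_p by (auto simp: order_def)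
  have zG: "z \<in> carrier G"
    using z(1) subgroup.subset[OF P(1)] by blast
  have "z [^] (p ^ n) = \<one>"
    using P.pow_order_eq_1[of z] z(1) P(2) by (simp add: order_def nat_pow_consistent[symmetric])
  then obtain k :: nat where k: "z [^] k \<noteq> \<one>" "(z [^] k) [^] p = \<one>"
    using ex_pow_of_order_prime[OF zG z(2) _ prime_p] by blast
  have "z \<in> center G P"
    using z zG unfolding center_def centralizer_def by auto
  then have "z [^] k \<in> center G P"
    using subgroup_center[OF P(1)] by (induction k) (auto intro: subgroup.m_closed subgroup.one_closed)
  then show ?thesis
    using k unfolding omega1_center_def by blast
qed

lemma omega1_center_sylow_in_A_p:
  assumes S: "sylow_subgroup G p (carrier G) S" and "p dvd order G"
  shows "omega1_center G p S \<in> A_p G p"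
proof -
  have S_sub: "subgroup S G" and S_card: "card S = p ^ multiplicity p (order G)"
    using S unfolding sylow_subgroup_def order_def by blast+
  have "multiplicity p (order G) > 0"
    using assms(2) finite_carrier prime_p
    by (simp add: prime_multiplicity_gt_zero_iff order_gt_0_iff_finite[symmetric])
  then show ?thesis
    using omega1_center_nontrivial[OF S_sub S_card] elem_abelian_omega1_center[OF S_sub]
    unfolding A_p_def by blast
qed

lemma center_subset_center_sylow:
  assumes T: "subgroup T G" "card T = p ^ a" and H: "subgroup H G"
    and Q: "sylow_subgroup G p H Q" "Q \<subseteq> T" and "center G T \<subseteq> H"
  shows "center G T \<subseteq> center G Q"
proof -
  have TH: "subgroup (T \<inter> H) G"
    using subgroups_Inter_pair[OF T(1) H] .
  obtain j where "card (T \<inter> H) = p ^ j"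
    using card_subgroup_prime_power[OF TH T(1) _ T(2)] by blast
  then have "T \<inter> H = Q"
    using sylow_subgroup_maximal[OF Q(1) H TH] Q unfolding sylow_subgroup_def by blast
  then have "center G T \<subseteq> Q"
    using assms(6) center_subset[of T] by blast
  then show ?thesis
    using Q(2) unfolding center_def centralizer_def by blast
qed

lemma omega1_center_sylow_centralizer_mono:
  assumes A: "A \<subseteq> carrier G" and B: "B \<subseteq> carrier G"
    and T: "sylow_subgroup G p (centralizer G A) T"
    and Q: "sylow_subgroup G p (centralizer G B) Q" "B \<subseteq> Q"
    and k: "k \<in> carrier G" "conj_set G A k \<subseteq> B"
  shows "\<exists>g\<in>carrier G. omega1_center G p T \<subseteq> conj_set G (omega1_center G p Q) g"
proof -
  have T_sub: "subgroup T G" and Q_sub: "subgroup Q G" and QG: "Q \<subseteq> carrier G"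
    using T Q(1) subgroup.subset unfolding sylow_subgroup_def by blast+
  have CA: "subgroup (centralizer G A) G"
    using subgroup_centralizer[OF A] .
  have "Q \<subseteq> centralizer G (conj_set G A k)"
    using Q(1) centralizer_antimono[OF k(2)] unfolding sylow_subgroup_def by blast
  then have "conj_set G Q (inv k) \<subseteq> conj_set G (conj_set G (centralizer G A) k) (inv k)"
    using centralizer_conj_set[OF A k(1)] conj_set_mono by metis
  then have Q_in_CA: "conj_set G Q (inv k) \<subseteq> centralizer G A"
    using conj_set_inv_cancel[OF centralizer_subset_carrier k(1)] by simp
  have "card (conj_set G Q (inv k)) = p ^ multiplicity p (card (centralizer G B))"
    using card_conj_set[OF QG] k(1) Q(1) by (simp add: sylow_subgroup_def)
  then obtain c where c: "c \<in> centralizer G A" "conj_set G (conj_set G Q (inv k)) c \<subseteq> T"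
    using sylow_conj_subset[OF CA T subgroup_conj_set[OF Q_sub inv_closed[OF k(1)]] Q_in_CA] by blast
  define g where "g = inv k \<otimes> c"
  have g: "g \<in> carrier G"
    using c(1) k(1) centralizer_subset_carrier unfolding g_def by blast
  have Qg_T: "conj_set G Q g \<subseteq> T"
    using c(2) conj_set_mult[OF QG _ centralizer_subset_carrier[THEN subsetD, OF c(1)]] k(1)
    unfolding g_def by simp
  have Qg_sylow: "sylow_subgroup G p (centralizer G (conj_set G B g)) (conj_set G Q g)"
    using Q(1) g QG B subgroup_conj_set[OF Q_sub g]
    by (simp add: sylow_subgroup_def centralizer_conj_set[symmetric] card_conj_set conj_set_mono
        centralizer_subset_carrier)
  have "center G T \<subseteq> centralizer G (conj_set G B g)"
    using conj_set_mono[OF Q(2), of g] Qg_T unfolding center_def centralizer_def by blast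
  then have "center G T \<subseteq> center G (conj_set G Q g)"
    using center_subset_center_sylow[OF T_sub _ subgroup_centralizer Qg_sylow Qg_T]
      conj_set_subset_carrier[OF B g] T unfolding sylow_subgroup_def by blast
  then have "omega1_center G p T \<subseteq> omega1_center G p (conj_set G Q g)"
    unfolding omega1_center_def by blast
  then show ?thesis
    using omega1_center_conj_set[OF QG g] g by auto
qed

lemma ex_conj_sylow_centralizer:
  assumes S: "sylow_subgroup G p (carrier G) S" and A: "A \<in> A_p G p"
  shows "\<exists>h\<in>carrier G. conj_set G A h \<subseteq> S \<and>
    sylow_subgroup G p (centralizer G (conj_set G A h)) (S \<inter> centralizer G (conj_set G A h))"
proof -
  have AG: "A \<subseteq> carrier G" and A_sub: "subgroup A G"
    using A_p_subset_carrier[OF A] A_p_subgroup[OF A] .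
  have CA: "subgroup (centralizer G A) G"
    using subgroup_centralizer[OF AG] .
  obtain T where T: "sylow_subgroup G p (centralizer G A) T"
    using sylow_subgroup_exists[OF CA] by blast
  have T_sub: "subgroup T G" and TG: "T \<subseteq> carrier G"
    and T_card: "card T = p ^ multiplicity p (card (centralizer G A))"
    using T subgroup.subset unfolding sylow_subgroup_def by blast+
  obtain n where "card A = p ^ n"
    using card_elem_abelian_psubgroup[OF finite_carrier prime_p] A unfolding A_p_def by blast
  then obtain c where c: "c \<in> centralizer G A" "conj_set G A c \<subseteq> T"
    using sylow_conj_subset[OF CA T A_sub A_p_subset_centralizer[OF A]] by blast
  have A_T: "A \<subseteq> T"
    using c conj_set_self_if_centralizer[OF AG c(1)] by simp
  obtain h where h: "h \<in> carrier G" "conj_set G T h \<subseteq> S"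
    using sylow_conj_subset_of_carrier[OF S T_sub T_card] by blast
  define C where "C = centralizer G (conj_set G A h)"
  have C_conj: "C = conj_set G (centralizer G A) h"
    unfolding C_def using centralizer_conj_set[OF AG h(1)] by simp
  have C_sub: "subgroup C G"
    unfolding C_def using subgroup_centralizer[OF conj_set_subset_carrier[OF AG h(1)]] .
  have Th_sylow: "sylow_subgroup G p C (conj_set G T h)"
    using T h(1) TG subgroup_conj_set[OF T_sub h(1)]
    by (simp add: C_conj sylow_subgroup_def card_conj_set conj_set_mono centralizer_subset_carrier)
  have S_sub: "subgroup S G" and S_card: "card S = p ^ multiplicity p (card (carrier G))"
    using S unfolding sylow_subgroup_def by blast+
  have SC: "subgroup (S \<inter> C) G"
    using subgroups_Inter_pair[OF S_sub C_sub] .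
  obtain j where "card (S \<inter> C) = p ^ j"
    using card_subgroup_prime_power[OF SC S_sub _ S_card] by blast
  then have "S \<inter> C = conj_set G T h"
    using sylow_subgroup_maximal[OF Th_sylow C_sub SC] h(2) Th_sylow
    unfolding sylow_subgroup_def by blast
  moreover have "conj_set G A h \<subseteq> S"
    using conj_set_mono[OF A_T] h(2) by blast
  ultimately show ?thesis
    using h(1) Th_sylow unfolding C_def by (intro bexI[of _ h]) simp_all
qed

end

section \<open>The orbit poset\<close>

text \<open>
  The map on orbits sends the orbit of a chosen \<open>good\<close> representative \<open>A\<close> to the orbit of
  \<open>W A\<close>; \<open>B\<close> gives the cone point.
\<close>

lemma (in group) conically_contractible_conj_orbits:
  fixes As :: "'a set set" and good :: "'a set \<Rightarrow> bool" and W :: "'a set \<Rightarrow> 'a set"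
  assumes As_carrier: "\<And>A. A \<in> As \<Longrightarrow> A \<subseteq> carrier G"
    and good_in_As: "\<And>A. good A \<Longrightarrow> A \<in> As"
    and good_conj_exists: "\<And>A. A \<in> As \<Longrightarrow> \<exists>g\<in>carrier G. good (conj_set G A g)"
    and W_in_As: "\<And>A. good A \<Longrightarrow> W A \<in> As"
    and W_above: "\<And>A. good A \<Longrightarrow> A \<subseteq> W A"
    and W_base: "B \<in> As" "\<And>A. good A \<Longrightarrow> B \<subseteq> W A"
    and W_mono: "\<And>A A' k. good A \<Longrightarrow> good A' \<Longrightarrow> k \<in> carrier G \<Longrightarrow> conj_set G A k \<subseteq> A' \<Longrightarrow>
      \<exists>g\<in>carrier G. W A \<subseteq> conj_set G (W A') g"
  shows "conically_contractible (conj_orbit G ` As) orbit_le"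
proof -
  define P where "P = conj_orbit G ` As"
  define rep where "rep x = (SOME A. A \<in> x \<and> good A)" for x
  have rep: "rep x \<in> x" "good (rep x)" "x = conj_orbit G (rep x)" if x: "x \<in> P" for x
  proof -
    obtain A where A: "A \<in> As" "x = conj_orbit G A"
      using x unfolding P_def by blast
    then obtain g where "g \<in> carrier G" "good (conj_set G A g)"
      using good_conj_exists by blast
    then have "\<exists>A. A \<in> x \<and> good A"
      using A conj_set_in_conj_orbit by blast
    then show "rep x \<in> x" "good (rep x)"
      unfolding rep_def by (metis (mono_tags, lifting) someI_ex)+
    then show "x = conj_orbit G (rep x)"
      using A conj_orbit_eq As_carrier by metis
  qed
  define f where "f x = conj_orbit G (W (rep x))" for x
  define x0 where "x0 = conj_orbit G B"
  have W_carrier: "W (rep x) \<subseteq> carrier G" if "x \<in> P" for x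
    using As_carrier W_in_As rep(2)[OF that] by blast
  have "f x \<in> P" if "x \<in> P" for x
    using W_in_As[OF rep(2)[OF that]] unfolding f_def P_def by blast
  moreover have "x0 \<in> P"
    unfolding x0_def P_def using W_base(1) by blast
  moreover have "orbit_le (f x) (f y)" if x: "x \<in> P" and y: "y \<in> P" and "orbit_le x y" for x y
  proof -
    obtain a b where ab: "a \<in> x" "b \<in> y" "a \<subseteq> b"
      using \<open>orbit_le x y\<close> unfolding orbit_le_def by blast
    obtain g1 where g1: "g1 \<in> carrier G" "a = conj_set G (rep x) g1"
      using ab(1) rep(3)[OF x] unfolding conj_orbit_def by blast
    obtain g2 where g2: "g2 \<in> carrier G" "b = conj_set G (rep y) g2"
      using ab(2) rep(3)[OF y] unfolding conj_orbit_def by blast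
    have rep_carrier: "rep x \<subseteq> carrier G" "rep y \<subseteq> carrier G"
      using As_carrier good_in_As rep(2) x y by blast+
    have "conj_set G (rep x) (g1 \<otimes> inv g2) = conj_set G a (inv g2)"
      using g1 g2 rep_carrier by (simp add: conj_set_mult)
    also have "\<dots> \<subseteq> conj_set G b (inv g2)"
      using conj_set_mono[OF ab(3)] .
    also have "\<dots> = rep y"
      using g2 rep_carrier by (simp add: conj_set_inv_cancel)
    finally obtain g where g: "g \<in> carrier G" "W (rep x) \<subseteq> conj_set G (W (rep y)) g"
      using W_mono[OF rep(2)[OF x] rep(2)[OF y] m_closed[OF g1(1) inv_closed[OF g2(1)]]] by blast
    have "W (rep x) \<in> f x" "conj_set G (W (rep y)) g \<in> f y"
      unfolding f_def using self_in_conj_orbit[OF W_carrier[OF x]] conj_set_in_conj_orbit[OF g(1)] .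
    then show ?thesis
      unfolding orbit_le_def using g(2) by blast
  qed
  moreover have "orbit_le x (f x) \<and> orbit_le x0 (f x)" if x: "x \<in> P" for x
  proof -
    have "W (rep x) \<in> f x" "B \<in> x0"
      unfolding f_def x0_def using self_in_conj_orbit W_carrier[OF x] As_carrier[OF W_base(1)] by auto
    then show ?thesis
      unfolding orbit_le_def using rep(1,2)[OF x] W_above W_base(2) by blast
  qed
  ultimately show ?thesis
    unfolding conically_contractible_def P_def[symmetric] by blast
qed

theorem theorem4p3:
  fixes G :: "('a, 'b) monoid_scheme" and p :: nat
  assumes "group G" and "finite (carrier G)"
    and "Factorial_Ring.prime p" and "p dvd order G"
  shows "conically_contractible (A_p_orbits G p) orbit_le"
proof -
  interpret finite_group_prime G p
    using assms(1-3) by (simp add: finite_group_prime_def finite_group_prime_axioms_def)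
  obtain S where S: "sylow_subgroup G p (carrier G) S"
    using sylow_subgroup_exists[OF subgroup_self] by blast
  then have S_sub: "subgroup S G"
    unfolding sylow_subgroup_def by blast
  define good where "good A \<longleftrightarrow> A \<in> A_p G p \<and> A \<subseteq> S \<and>
    sylow_subgroup G p (centralizer G A) (S \<inter> centralizer G A)" for A
  show ?thesis
    unfolding A_p_orbits_def
  proof (rule conically_contractible_conj_orbits[where good = good
        and W = "\<lambda>A. omega1_center G p (S \<inter> centralizer G A)" and B = "omega1_center G p S"])
    show "\<exists>g\<in>carrier G. good (conj_set G A g)" if "A \<in> A_p G p" for A
      using ex_conj_sylow_centralizer[OF S that] A_p_conj_set[OF that] unfolding good_def by blast
    show "omega1_center G p (S \<inter> centralizer G A) \<in> A_p G p" if "good A" for A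
      using that subgroups_Inter_pair[OF S_sub subgroup_centralizer] A_p_subset_carrier
      by (intro omega1_center_in_A_p[of _ A] A_p_subset_omega1_center) (auto simp: good_def)
    show "omega1_center G p S \<subseteq> omega1_center G p (S \<inter> centralizer G A)" if "good A" for A
      using that subgroup.subset[OF S_sub] unfolding good_def
      by (intro omega1_center_subset_Int_centralizer) auto
    show "\<exists>g\<in>carrier G. omega1_center G p (S \<inter> centralizer G A)
        \<subseteq> conj_set G (omega1_center G p (S \<inter> centralizer G A')) g"
      if "good A" "good A'" "k \<in> carrier G" "conj_set G A k \<subseteq> A'" for A A' k
      using that A_p_subset_carrier A_p_subset_centralizer[of A' p] unfolding good_def
      by (intro omega1_center_sylow_centralizer_mono) auto
  qed (auto simp: good_def A_p_subset_carrier A_p_subset_omega1_center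
      omega1_center_sylow_in_A_p[OF S assms(4)])
qed

end
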